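(* For every $n\ge1$, $$\left(h_{j-i}(X_j,X_{j+1},\dots,X_n)\right)_{1\le i,j\le n}\cdot\left(h_{1-i-j}(X_1,\dots,X_i)\right)_{1\le i,j\le n}=\left(h_{1-i-j}(X_1,\dots,X_n)\right)_{1\le i,j\le n}.$$
   Context: Extended complete homogeneous symmetric functions: for $k\ge0$, $h_k(X_1,\dots,X_m)=\sum_{l_1+\dots+l_m=k,\ l_i\ge0}X_1^{l_1}\cdots X_m^{l_m}$; for $k<0$, $h_k(X_1,\dots,X_m)=(-1)^{m+1}\sum_{l_1+\dots+l_m=k,\ l_i<0}X_1^{l_1}\cdots X_m^{l_m}$. *)

theory Defs
  imports Complex_Main
begin

definition hsym :: "int \<Rightarrow> (nat \<Rightarrow> 'a::field) \<Rightarrow> nat \<Rightarrow> nat \<Rightarrow> 'a" where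
  "hsym k X a b =
    (if k \<ge> 0 then
       (\<Sum>l\<in>{l. (\<forall>i. i \<notin> {a..b} \<longrightarrow> l i = 0) \<and> (\<forall>i\<in>{a..b}. l i \<ge> 0)
                  \<and> (\<Sum>i\<in>{a..b}. l i) = k}.
          \<Prod>i\<in>{a..b}. X i powi l i)
     else
       (-1) ^ (card {a..b} + 1) *
       (\<Sum>l\<in>{l. (\<forall>i. i \<notin> {a..b} \<longrightarrow> l i = 0) \<and> (\<forall>i\<in>{a..b}. l i < 0)
                  \<and> (\<Sum>i\<in>{a..b}. l i) = k}.
          \<Prod>i\<in>{a..b}. X i powi l i))"

end

theory Submission imports Defs "HOL-Library.FuncSet" begin

text \<open>Sorting exponent vectors by their last entry gives the recurrence
  h_r(X_a..X_(b+1)) = h_r(X_a..X_b) + X_(b+1) h_(r-1)(X_a..X_(b+1)) for every integer r.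
  It makes both sides of the identity, as functions F i n, satisfy
  F i (n+1) = F i n + X_(n+1) F (i+1) (n+1). On the diagonal i = n both sides reduce to
  h_(1-n-j)(X_1..X_n), because h_r vanishes in m variables for -m < r < 0, and the
  recurrence determines the rest.\<close>

definition exp_vectors :: "(int \<Rightarrow> bool) \<Rightarrow> nat \<Rightarrow> nat \<Rightarrow> int \<Rightarrow> (nat \<Rightarrow> int) set" where
  "exp_vectors P a b k = {l. (\<forall>i. i \<notin> {a..b} \<longrightarrow> l i = 0) \<and> (\<forall>i\<in>{a..b}. P (l i)) \<and> (\<Sum>i\<in>{a..b}. l i) = k}"

definition monomial :: "(nat \<Rightarrow> 'a::field) \<Rightarrow> nat \<Rightarrow> nat \<Rightarrow> (nat \<Rightarrow> int) \<Rightarrow> 'a" where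
  "monomial X a b l = (\<Prod>i\<in>{a..b}. X i powi l i)"

lemma hsym_nonneg:
  "0 \<le> k \<Longrightarrow> hsym k X a b = sum (monomial X a b) (exp_vectors (\<lambda>e. 0 \<le> e) a b k)"
  by (simp add: hsym_def exp_vectors_def monomial_def)

lemma hsym_neg:
  "k < 0 \<Longrightarrow> hsym k X a b = (-1) ^ (card {a..b} + 1) * sum (monomial X a b) (exp_vectors (\<lambda>e. e < 0) a b k)"
  by (simp add: hsym_def exp_vectors_def monomial_def)

lemma exp_vectors_outside: "l \<in> exp_vectors P a b k \<Longrightarrow> i \<notin> {a..b} \<Longrightarrow> l i = 0"
  by (simp add: exp_vectors_def)

lemma exp_vectors_entry: "l \<in> exp_vectors P a b k \<Longrightarrow> i \<in> {a..b} \<Longrightarrow> P (l i)"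
  by (simp add: exp_vectors_def)

lemma finite_exp_vectors_bounded:
  assumes "\<And>l i. l \<in> exp_vectors P a b k \<Longrightarrow> i \<in> {a..b} \<Longrightarrow> l i \<in> {lo..hi}"
  shows "finite (exp_vectors P a b k)"
proof -
  let ?ext = "\<lambda>f i. if i \<in> {a..b} then f i else 0"
  have "exp_vectors P a b k \<subseteq> ?ext ` PiE {a..b} (\<lambda>_. {lo..hi})"
  proof
    fix l assume l: "l \<in> exp_vectors P a b k"
    then have "l = ?ext (restrict l {a..b})"
      by (auto simp: exp_vectors_def fun_eq_iff)
    moreover have "restrict l {a..b} \<in> PiE {a..b} (\<lambda>_. {lo..hi})"
      using assms l by auto
    ultimately show "l \<in> ?ext ` PiE {a..b} (\<lambda>_. {lo..hi})" by blast
  qed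
  then show ?thesis
    by (rule finite_subset) (intro finite_imageI finite_PiE; simp)
qed

lemma finite_exp_vectors_nonneg: "finite (exp_vectors (\<lambda>e. 0 \<le> e) a b k)"
proof (rule finite_exp_vectors_bounded)
  fix l i assume l: "l \<in> exp_vectors (\<lambda>e. 0 \<le> e) a b k" and i: "i \<in> {a..b}"
  have "l i \<le> sum l {a..b}"
    using l i by (intro member_le_sum) (auto simp: exp_vectors_def)
  with l i show "l i \<in> {0..k}" by (simp add: exp_vectors_def)
qed

lemma finite_exp_vectors_neg: "finite (exp_vectors (\<lambda>e. e < 0) a b k)"
proof (rule finite_exp_vectors_bounded)
  fix l i assume l: "l \<in> exp_vectors (\<lambda>e. e < 0) a b k" and i: "i \<in> {a..b}"
  have "- l i \<le> (\<Sum>i\<in>{a..b}. - l i)"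
    using l i by (intro member_le_sum[of _ _ "\<lambda>i. - l i"]) (auto simp: exp_vectors_def less_imp_le)
  moreover have "l i < 0" using exp_vectors_entry[OF l i] by simp
  ultimately show "l i \<in> {k..-1}" using l by (simp add: exp_vectors_def sum_negf)
qed

lemma monomial_upd_last:
  "a \<le> Suc b \<Longrightarrow> monomial X a (Suc b) (l(Suc b := e)) = X (Suc b) powi e * monomial X a b l"
  by (simp add: monomial_def)

lemma sum_monomial_exp_vectors_last_fixed:
  assumes "a \<le> Suc b" and "P e"
  shows "sum (monomial X a (Suc b)) {l \<in> exp_vectors P a (Suc b) k. l (Suc b) = e}
           = X (Suc b) powi e * sum (monomial X a b) (exp_vectors P a b (k - e))"
proof -
  let ?put = "\<lambda>l. l(Suc b := e)"
  have "{l \<in> exp_vectors P a (Suc b) k. l (Suc b) = e} = ?put ` exp_vectors P a b (k - e)"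
  proof (intro equalityI subsetI)
    fix l assume l: "l \<in> {l \<in> exp_vectors P a (Suc b) k. l (Suc b) = e}"
    then have "l = ?put (l(Suc b := 0))" "l(Suc b := 0) \<in> exp_vectors P a b (k - e)"
      using assms by (auto simp: exp_vectors_def)
    then show "l \<in> ?put ` exp_vectors P a b (k - e)" by blast
  qed (use assms in \<open>auto simp: exp_vectors_def\<close>)
  moreover have "inj_on ?put (exp_vectors P a b (k - e))"
  proof (rule inj_onI)
    fix l l' assume "l \<in> exp_vectors P a b (k - e)" "l' \<in> exp_vectors P a b (k - e)" and put: "?put l = ?put l'"
    then have "l (Suc b) = 0" "l' (Suc b) = 0"
      by (simp_all add: exp_vectors_outside)
    then have "l = (?put l)(Suc b := 0)" "l' = (?put l')(Suc b := 0)"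
      by auto
    with put show "l = l'" by simp
  qed
  ultimately show ?thesis
    using assms by (simp add: sum.reindex monomial_upd_last sum_distrib_left)
qed

lemma sum_monomial_exp_vectors_shift_last:
  assumes "a \<le> Suc b" and "X (Suc b) \<noteq> 0" and "\<And>x. P x \<Longrightarrow> P (x + d)"
  shows "sum (monomial X a (Suc b)) {l \<in> exp_vectors P a (Suc b) (k + d). P (l (Suc b) - d)}
           = X (Suc b) powi d * sum (monomial X a (Suc b)) (exp_vectors P a (Suc b) k)"
proof -
  let ?shift = "\<lambda>d l. l(Suc b := l (Suc b) + d)"
  have monomial_shift: "monomial X a (Suc b) (?shift d l) = X (Suc b) powi d * monomial X a (Suc b) l" for l
    using monomial_upd_last[OF assms(1), of X l "l (Suc b)"] monomial_upd_last[OF assms(1), of X l]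
    by (simp add: assms(2) power_int_add)
  have monomial_unshift:
    "X (Suc b) powi d * monomial X a (Suc b) (l(Suc b := l (Suc b) - d)) = monomial X a (Suc b) l" for l
    using monomial_shift[of "?shift (- d) l"] by simp
  show ?thesis
    unfolding sum_distrib_left
  proof (rule sum.reindex_bij_witness[where i = "?shift d" and j = "?shift (- d)"])
    fix l assume "l \<in> {l \<in> exp_vectors P a (Suc b) (k + d). P (l (Suc b) - d)}"
    then show "?shift (- d) l \<in> exp_vectors P a (Suc b) k"
      using assms(1) by (auto simp: exp_vectors_def)
  next
    fix l assume "l \<in> exp_vectors P a (Suc b) k"
    then show "?shift d l \<in> {l \<in> exp_vectors P a (Suc b) (k + d). P (l (Suc b) - d)}"
      using assms(1,3) by (auto simp: exp_vectors_def)
  qed (simp_all add: monomial_unshift)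
qed

text \<open>Peeling off the last variable: the vectors whose last exponent can still be moved by
  -d form a shifted copy of the exponent set, the remaining ones all have last exponent e.\<close>

lemma sum_monomial_exp_vectors_Suc_right:
  assumes "a \<le> Suc b" and "X (Suc b) \<noteq> 0" and "finite (exp_vectors P a (Suc b) (k + d))"
    and "\<And>x. P x \<Longrightarrow> P (x + d)" and "\<And>x. (P x \<and> \<not> P (x - d)) = (x = e)"
  shows "sum (monomial X a (Suc b)) (exp_vectors P a (Suc b) (k + d))
           = X (Suc b) powi d * sum (monomial X a (Suc b)) (exp_vectors P a (Suc b) k)
             + X (Suc b) powi e * sum (monomial X a b) (exp_vectors P a b (k + d - e))"
proof -
  let ?A = "exp_vectors P a (Suc b) (k + d)" and ?movable = "{l. P (l (Suc b) - d)}"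
  have "P e" using assms(5) by blast
  have "?A - ?movable = {l \<in> ?A. l (Suc b) = e}"
  proof (intro equalityI subsetI)
    fix l assume l: "l \<in> ?A - ?movable"
    then have "P (l (Suc b))" using assms(1) by (auto intro: exp_vectors_entry)
    with l assms(5) show "l \<in> {l \<in> ?A. l (Suc b) = e}" by blast
  qed (use assms(5) in blast)
  moreover have "?A \<inter> ?movable = {l \<in> ?A. P (l (Suc b) - d)}" by blast
  ultimately show ?thesis
    using sum.Int_Diff[OF assms(3), of "monomial X a (Suc b)" ?movable]
      sum_monomial_exp_vectors_shift_last[where X = X and b = b and P = P and k = k, OF assms(1,2,4)]
      sum_monomial_exp_vectors_last_fixed[where X = X and P = P, OF assms(1) \<open>P e\<close>]
    by (simp only:)
qed

lemma hsym_zero: "hsym 0 X a b = 1"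
proof -
  have "exp_vectors (\<lambda>e. 0 \<le> e) a b 0 = {\<lambda>_. 0}"
  proof (intro equalityI subsetI)
    fix l assume l: "l \<in> exp_vectors (\<lambda>e. 0 \<le> e) a b 0"
    then have "\<forall>i\<in>{a..b}. l i = 0"
      using sum_nonneg_eq_0_iff[of "{a..b}" l] by (auto simp: exp_vectors_def)
    with l show "l \<in> {\<lambda>_. 0}" by (auto simp: exp_vectors_def fun_eq_iff)
  qed (auto simp: exp_vectors_def)
  then show ?thesis by (simp add: hsym_nonneg monomial_def)
qed

lemma hsym_single: "hsym r X a a = X a powi r"
proof (cases "0 \<le> r")
  case True
  then have "exp_vectors (\<lambda>e. 0 \<le> e) a a r = {(\<lambda>_. 0)(a := r)}"
    by (auto simp: exp_vectors_def fun_eq_iff)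
  with True show ?thesis by (simp add: hsym_nonneg monomial_def)
next
  case False
  then have "exp_vectors (\<lambda>e. e < 0) a a r = {(\<lambda>_. 0)(a := r)}"
    by (auto simp: exp_vectors_def fun_eq_iff)
  with False show ?thesis by (simp add: hsym_neg monomial_def)
qed

lemma hsym_eq_0:
  assumes "r < 0" and "- r \<le> int b - int a"
  shows "hsym r X a b = 0"
proof -
  have "exp_vectors (\<lambda>e. e < 0) a b r = {}"
  proof (rule ccontr)
    assume "exp_vectors (\<lambda>e. e < 0) a b r \<noteq> {}"
    then obtain l where l: "l \<in> exp_vectors (\<lambda>e. e < 0) a b r" by blast
    then have "sum l {a..b} \<le> (\<Sum>i\<in>{a..b}. -1)"
      using exp_vectors_entry[OF l] by (intro sum_mono) fastforce
    with l assms show False by (simp add: exp_vectors_def)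
  qed
  with assms show ?thesis by (simp add: hsym_neg)
qed

lemma hsym_Suc_right:
  assumes "a \<le> b" and "X (Suc b) \<noteq> 0"
  shows "hsym r X a (Suc b) = hsym r X a b + X (Suc b) * hsym (r - 1) X a (Suc b)"
proof -
  have ab: "a \<le> Suc b" using assms(1) by simp
  consider "1 \<le> r" | "r = 0" | "r < 0" by linarith
  then show ?thesis
  proof cases
    case 1
    have last_exp: "(0 \<le> x \<and> \<not> 0 \<le> x - 1) = (x = 0)" for x :: int by auto
    have "sum (monomial X a (Suc b)) (exp_vectors (\<lambda>e. 0 \<le> e) a (Suc b) (r - 1 + 1))
        = X (Suc b) * sum (monomial X a (Suc b)) (exp_vectors (\<lambda>e. 0 \<le> e) a (Suc b) (r - 1))
          + sum (monomial X a b) (exp_vectors (\<lambda>e. 0 \<le> e) a b (r - 1 + 1))"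
      using sum_monomial_exp_vectors_Suc_right[where X = X and P = "\<lambda>e. 0 \<le> e" and k = "r - 1",
          OF ab assms(2) finite_exp_vectors_nonneg _ last_exp]
      by simp
    with 1 show ?thesis by (simp add: hsym_nonneg)
  next
    case 2
    have "hsym (-1) X a (Suc b) = 0"
      using assms(1) by (intro hsym_eq_0) auto
    with 2 show ?thesis by (simp add: hsym_zero)
  next
    case 3
    let ?U = "\<lambda>r c. sum (monomial X a c) (exp_vectors (\<lambda>e. e < 0) a c r)"
    define s :: 'a where "s = (-1) ^ (card {a..b} + 1)"
    have card: "card {a..Suc b} = Suc (card {a..b})"
      using assms(1) by simp
    have signs: "hsym r X a b = s * ?U r b" "hsym r X a (Suc b) = - s * ?U r (Suc b)"
        "hsym (r - 1) X a (Suc b) = - s * ?U (r - 1) (Suc b)"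
      using 3 card by (simp_all add: hsym_neg s_def)
    have last_exp: "(x < 0 \<and> \<not> x - - 1 < 0) = (x = - 1)" for x :: int by auto
    have peel: "X (Suc b) * ?U (r - 1) (Suc b) = ?U r (Suc b) + ?U r b"
      using sum_monomial_exp_vectors_Suc_right[where X = X and P = "\<lambda>e. e < 0" and k = r,
          OF ab assms(2) finite_exp_vectors_neg _ last_exp] assms(2)
      by (simp add: power_int_minus field_simps)
    have "hsym r X a b + X (Suc b) * hsym (r - 1) X a (Suc b)
        = s * ?U r b - s * (X (Suc b) * ?U (r - 1) (Suc b))"
      by (simp add: signs)
    also have "\<dots> = s * ?U r b - s * (?U r (Suc b) + ?U r b)"
      by (simp only: peel)
    also have "\<dots> = hsym r X a (Suc b)"
      by (simp add: signs algebra_simps)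
    finally show ?thesis by simp
  qed
qed

lemma sum_hsym_Suc_right:
  assumes "X (Suc n) \<noteq> 0"
  shows "(\<Sum>k\<in>{a..Suc n}. hsym (int k - int i) X k (Suc n) * B k)
           = (\<Sum>k\<in>{a..n}. hsym (int k - int i) X k n * B k)
             + X (Suc n) * (\<Sum>k\<in>{a..Suc n}. hsym (int k - int (Suc i)) X k (Suc n) * B k)"
proof -
  have "hsym (int k - int i) X k (Suc n) * B k
      = hsym (int k - int i) X k n * B k + X (Suc n) * (hsym (int k - int (Suc i)) X k (Suc n) * B k)"
    if "k \<le> n" for k
    using hsym_Suc_right[of k n X "int k - int i", OF that assms] by (simp add: algebra_simps)
  moreover have "hsym (int (Suc n) - int i) X (Suc n) (Suc n)
      = X (Suc n) * hsym (int (Suc n) - int (Suc i)) X (Suc n) (Suc n)"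
    using power_int_add_1'[of "X (Suc n)" "int (Suc n) - int (Suc i)"] assms
    by (simp add: hsym_single algebra_simps)
  ultimately show ?thesis
    by (simp add: sum.distrib sum_distrib_left algebra_simps)
qed

lemma sum_hsym_diag:
  assumes "a \<le> n"
  shows "(\<Sum>k\<in>{a..n}. hsym (int k - int n) X k n * B k) = B n"
proof -
  have "{a..n} = insert n {a..<n}" using assms by auto
  moreover have "hsym (int k - int n) X k n = 0" if "k < n" for k
    using that by (intro hsym_eq_0) auto
  ultimately show ?thesis by (simp add: hsym_zero)
qed

lemma triangular_recurrence_unique:
  fixes F G :: "nat \<Rightarrow> nat \<Rightarrow> 'a::{plus,times}"
  assumes F: "\<And>i n. 1 \<le> i \<Longrightarrow> i \<le> n \<Longrightarrow> n < N \<Longrightarrow> F i (Suc n) = F i n + c n * F (Suc i) (Suc n)"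
    and G: "\<And>i n. 1 \<le> i \<Longrightarrow> i \<le> n \<Longrightarrow> n < N \<Longrightarrow> G i (Suc n) = G i n + c n * G (Suc i) (Suc n)"
    and diag: "\<And>n. 1 \<le> n \<Longrightarrow> n \<le> N \<Longrightarrow> F n n = G n n"
  shows "1 \<le> i \<Longrightarrow> i \<le> n \<Longrightarrow> n \<le> N \<Longrightarrow> F i n = G i n"
proof (induction n arbitrary: i)
  case 0
  then show ?case by simp
next
  case (Suc n)
  have "1 \<le> i \<longrightarrow> F i (Suc n) = G i (Suc n)"
    using \<open>i \<le> Suc n\<close>
  proof (induction i rule: inc_induct)
    case base
    show ?case using Suc.prems(3) by (simp add: diag)
  next
    case (step m)
    show ?case
      using step Suc.IH[of m] Suc.prems(3) F[of m n] G[of m n] by simp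
  qed
  with Suc.prems show ?case by simp
qed

theorem mainTheorem13:
  fixes X :: "nat \<Rightarrow> 'a::field" and n :: nat
  assumes "n \<ge> 1"
    and "\<And>i. i \<in> {1..n} \<Longrightarrow> X i \<noteq> 0"
  shows "\<forall>i\<in>{1..n}. \<forall>j\<in>{1..n}.
           (\<Sum>k\<in>{1..n}. hsym (int k - int i) X k n * hsym (1 - int k - int j) X 1 k)
           = hsym (1 - int i - int j) X 1 n"
proof (intro ballI)
  fix i j assume i: "i \<in> {1..n}"
  let ?B = "\<lambda>k. hsym (1 - int k - int j) X 1 k"
  show "(\<Sum>k\<in>{1..n}. hsym (int k - int i) X k n * ?B k) = hsym (1 - int i - int j) X 1 n"
  proof (rule triangular_recurrence_unique[where N = n and c = "\<lambda>m. X (Suc m)"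
      and F = "\<lambda>i n. \<Sum>k\<in>{1..n}. hsym (int k - int i) X k n * ?B k"
      and G = "\<lambda>i n. hsym (1 - int i - int j) X 1 n"])
    fix i' m assume "1 \<le> i'" "i' \<le> m" "m < n"
    then have X_Suc: "X (Suc m) \<noteq> 0" and "1 \<le> m" using assms(2) by auto
    from X_Suc show "(\<Sum>k\<in>{1..Suc m}. hsym (int k - int i') X k (Suc m) * ?B k)
        = (\<Sum>k\<in>{1..m}. hsym (int k - int i') X k m * ?B k)
          + X (Suc m) * (\<Sum>k\<in>{1..Suc m}. hsym (int k - int (Suc i')) X k (Suc m) * ?B k)"
      by (rule sum_hsym_Suc_right)
    show "hsym (1 - int i' - int j) X 1 (Suc m)
        = hsym (1 - int i' - int j) X 1 m + X (Suc m) * hsym (1 - int (Suc i') - int j) X 1 (Suc m)"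
      using hsym_Suc_right[of 1 m X "1 - int i' - int j", OF \<open>1 \<le> m\<close> X_Suc] by simp
  qed (use i in \<open>simp_all add: sum_hsym_diag\<close>)
qed

end
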